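(* Let $X$ be a non-negative absolutely continuous random variable with distribution function $F$, density $f$ and reversed hazard rate $\lambda(t)=f(t)/F(t)$, and let $\mu>0$. Then $X$ has an exponential distribution with mean $\mu$ if and only if, for $s\ge 1$ and all $t>0$, $$\bar B_s(F;t)=\mu\,(\lambda(t))^s\,\frac{e^{st/\mu}-1}{s}.$$
   Context: The past entropy generating function is $\bar B_s(F;t)=\int_0^t\left(\frac{f(x)}{F(t)}\right)^s dx$, $s\ge 1$, for $t$ with $F(t)>0$. *)

theory Defs
  imports "HOL-Probability.Probability"
begin

definition past_egf :: "(real \<Rightarrow> real) \<Rightarrow> (real \<Rightarrow> real) \<Rightarrow> real \<Rightarrow> real \<Rightarrow> real" where
  "past_egf f F s t = integral {0..t} (\<lambda>x. (f x / F t) powr s)"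

definition rev_hazard :: "(real \<Rightarrow> real) \<Rightarrow> (real \<Rightarrow> real) \<Rightarrow> real \<Rightarrow> real" where
  "rev_hazard f F t = f t / F t"

end

(* With h = f^s and k = s/mu, the hypothesis says that the indefinite integral H of h satisfies
   H(t) = h(t) (e^(kt) - 1) / k for t > 0. Then H(t) e^(kt) / (e^(kt) - 1) has derivative zero, so
   h(t) e^(kt) is constant and f(t) = c e^(-t/mu) for t > 0; as X >= 0, normalising the density
   forces c = 1/mu. *)

theory Submission
  imports Defs
begin

lemma isCont_indefinite_integral:
  fixes h :: "real \<Rightarrow> real"
  assumes int: "\<And>x. a < x \<Longrightarrow> x < b \<Longrightarrow> h integrable_on {a..x}"
    and t: "a < t" "t < b"
  shows "isCont (\<lambda>x. integral {a..x} h) t"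
proof -
  define c where "c = (t + b) / 2"
  have c: "t < c" "c < b" using t by (auto simp: c_def)
  have "continuous_on {a..c} (\<lambda>x. integral {a..x} h)"
    using int c t by (intro indefinite_integral_continuous_1) auto
  moreover have "t \<in> interior {a..c}" using t c by simp
  ultimately show ?thesis using continuous_on_interior by blast
qed

lemma indefinite_integral_has_real_derivative:
  fixes h :: "real \<Rightarrow> real"
  assumes int: "\<And>x. a < x \<Longrightarrow> x < b \<Longrightarrow> h integrable_on {a..x}"
    and t: "a < t" "t < b" and cont: "isCont h t"
  shows "((\<lambda>x. integral {a..x} h) has_real_derivative h t) (at t)"
proof -
  define c where "c = (t + b) / 2"
  have c: "t < c" "c < b" using t by (auto simp: c_def)
  have "((\<lambda>x. integral {a..x} h) has_vector_derivative h t) (at t within {a..c} - {})"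
    using int c t cont
    by (intro integral_has_vector_derivative_continuous_at)
       (auto intro: continuous_at_imp_continuous_within)
  moreover have "t \<in> interior {a..c}" using t c by simp
  ultimately have "((\<lambda>x. integral {a..x} h) has_vector_derivative h t) (at t)"
    using at_within_interior[of t "{a..c}"] by (metis Diff_empty)
  then show ?thesis
    by (simp add: has_real_derivative_iff_has_vector_derivative)
qed

lemma integral_identity_imp_exp_mult_const:
  fixes h :: "real \<Rightarrow> real" and k T :: real
  assumes k: "k > 0"
    and int: "\<And>t. 0 < t \<Longrightarrow> t < T \<Longrightarrow> h integrable_on {0..t}"
    and eq: "\<And>t. 0 < t \<Longrightarrow> t < T \<Longrightarrow> integral {0..t} h = h t * (exp (k * t) - 1) / k"
  obtains A where "\<And>t. 0 < t \<Longrightarrow> t < T \<Longrightarrow> h t * exp (k * t) = A"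
proof -
  define G where "G x = integral {0..x} h" for x
  define E where "E x = exp (k * x) - 1" for x
  have E_pos: "E x > 0" if "x > 0" for x
    using that k by (simp add: E_def)
  have h_eq: "h x = k * G x / E x" if "0 < x" "x < T" for x
  proof -
    have "G x = h x * E x / k" using eq[OF that] by (simp add: G_def E_def)
    then show ?thesis using E_pos[OF that(1)] k by (simp add: field_simps)
  qed
  have h_cont: "isCont h x" if x: "0 < x" "x < T" for x
  proof -
    have "eventually (\<lambda>y. y \<in> {0<..<T}) (nhds x)"
      using x by (intro eventually_nhds_in_open) auto
    then have ev: "eventually (\<lambda>y. h y = k * G y / E y) (nhds x)"
      by eventually_elim (use h_eq in auto)
    have "isCont (\<lambda>y. k * G y / E y) x"
      unfolding G_def E_def using isCont_indefinite_integral[OF int x] E_pos[OF x(1)]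
      by (intro continuous_intros) (auto simp: E_def)
    then show ?thesis using isCont_cong[OF ev] by simp
  qed
  \<comment> \<open>\<open>Q = G e\<^sup>k\<^sup>x / E\<close> has derivative \<open>h - k G e\<^sup>k\<^sup>x / E\<^sup>2\<close>, which vanishes by \<open>h_eq\<close>.\<close>
  define Q where "Q x = G x + G x / E x" for x
  have Q_deriv: "(Q has_real_derivative 0) (at x within {0<..<T})" if "x \<in> {0<..<T}" for x
  proof -
    have x: "0 < x" "x < T" using that by auto
    have G': "(G has_real_derivative h x) (at x)"
      unfolding G_def[abs_def] by (rule indefinite_integral_has_real_derivative[OF int x h_cont[OF x]])
    have E': "(E has_real_derivative k * exp (k * x)) (at x)"
      unfolding E_def[abs_def] by (auto intro!: derivative_eq_intros)
    have "(Q has_real_derivative h x + (h x * E x - G x * (k * exp (k * x))) / (E x * E x)) (at x)"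
      unfolding Q_def[abs_def] using E_pos[OF x(1)] by (intro DERIV_add G' DERIV_divide E') auto
    moreover have "h x + (h x * E x - G x * (k * exp (k * x))) / (E x * E x) = 0"
    proof -
      have "G x * (k * exp (k * x)) = k * G x * (E x + 1)"
        by (simp add: E_def)
      also have "\<dots> = h x * E x * (E x + 1)"
        using h_eq[OF x] E_pos[OF x(1)] by simp
      finally show ?thesis using E_pos[OF x(1)] by (simp add: field_simps)
    qed
    ultimately show ?thesis by (metis has_field_derivative_at_within)
  qed
  obtain c where c: "\<And>x. x \<in> {0<..<T} \<Longrightarrow> Q x = c"
    using has_field_derivative_zero_constant[of "{0<..<T}" Q] Q_deriv by auto
  have "h x * exp (k * x) = k * c" if "0 < x" "x < T" for x
  proof -
    have "h x * exp (k * x) = k * G x / E x * (E x + 1)"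
      using h_eq[OF that] by (simp add: E_def)
    also have "\<dots> = k * Q x"
      using E_pos[OF that(1)] by (simp add: Q_def field_simps)
    finally show ?thesis using c[of x] that by simp
  qed
  then show ?thesis by (rule that)
qed

lemma integrable_on_if_bounded_off_finite:
  fixes h :: "real \<Rightarrow> real"
  assumes meas: "h \<in> borel_measurable borel" and N: "finite N"
    and bound: "\<And>x. x \<in> {a..b} - N \<Longrightarrow> \<bar>h x\<bar> \<le> B"
  shows "h integrable_on {a..b}"
proof -
  define h' where "h' x = (if x \<in> N then 0 else h x)" for x
  have "N \<in> sets borel"
    using N by (simp add: borel_closed finite_imp_closed)
  then have h'_meas: "h' \<in> borel_measurable borel"
    unfolding h'_def[abs_def] using meas by (intro measurable_If_set) auto
  have "h' integrable_on {a..b}"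
  proof (rule measurable_bounded_by_integrable_imp_integrable_real)
    show "h' \<in> borel_measurable (lebesgue_on {a..b})"
      by (rule measurable_restrict_space1[OF measurable_completion]) (simp add: h'_meas)
    show "(\<lambda>_. max B 0) integrable_on {a..b}"
      by (rule integrable_const_ivl)
    show "\<bar>h' x\<bar> \<le> max B 0" if "x \<in> {a..b}" for x
      using bound[of x] that by (auto simp: h'_def)
  qed simp
  then show ?thesis
    by (rule integrable_spike_finite[OF N, rotated]) (simp add: h'_def)
qed

lemma integral_identity_imp_integrable:
  fixes h :: "real \<Rightarrow> real" and k :: real
  assumes k: "k > 0" and meas: "h \<in> borel_measurable borel" and nonneg: "\<And>x. h x \<ge> 0"
    and eq: "\<And>t. 0 < t \<Longrightarrow> integral {0..t} h = h t * (exp (k * t) - 1) / k"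
    and b: "b > 0"
  shows "h integrable_on {0..b}"
proof (rule ccontr)
  assume not_int: "\<not> h integrable_on {0..b}"
  define S where "S = {t. 0 < t \<and> \<not> h integrable_on {0..t}}"
  define T where "T = Inf S"
  have "b \<in> S"
    using not_int b by (simp add: S_def)
  then have S: "S \<noteq> {}" "bdd_below S"
    by (auto simp: S_def intro: bdd_belowI[of _ 0])
  have "T \<ge> 0"
    unfolding T_def using S by (intro cInf_greatest) (auto simp: S_def)
  have int_below: "h integrable_on {0..t}" if t: "0 < t" "t < T" for t
  proof (rule ccontr)
    assume "\<not> h integrable_on {0..t}"
    then have "t \<in> S" using t by (simp add: S_def)
    then have "T \<le> t" unfolding T_def using S(2) by (rule cInf_lower)
    then show False using t by simp
  qed
  \<comment> \<open>Beyond \<open>T\<close> the integral is the junk value \<open>0\<close>, which forces \<open>h = 0\<close> there;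
     below \<open>T\<close> the identity bounds \<open>h\<close>, so \<open>h\<close> is integrable after all.\<close>
  have zero_above: "h t = 0" if tT: "t > T" for t
  proof -
    obtain x where x: "x \<in> S" "x < t"
      using cInf_less_iff[OF S, of t] tT by (auto simp: T_def)
    then have "\<not> h integrable_on {0..t}"
      using integrable_subinterval_real[of h 0 t 0 x] by (auto simp: S_def)
    then have "h t * (exp (k * t) - 1) / k = 0"
      using eq[of t] \<open>T \<ge> 0\<close> tT by (simp add: not_integrable_integral)
    then show ?thesis using k \<open>T \<ge> 0\<close> tT by simp
  qed
  obtain A where A: "\<And>t. 0 < t \<Longrightarrow> t < T \<Longrightarrow> h t * exp (k * t) = A"
    using integral_identity_imp_exp_mult_const[OF k int_below eq] by blast
  have "\<bar>h x\<bar> \<le> max A 0" if x: "x \<in> {0..b} - {0, T}" for x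
  proof (cases "x < T")
    case True
    have "x > 0" using x by auto
    have "\<bar>h x\<bar> = h x * 1" using nonneg[of x] by simp
    also have "\<dots> \<le> h x * exp (k * x)"
      using nonneg[of x] \<open>x > 0\<close> k by (intro mult_left_mono) auto
    also have "\<dots> = A" using A[OF \<open>x > 0\<close> True] .
    finally show ?thesis by simp
  next
    case False
    then show ?thesis using zero_above[of x] x by simp
  qed
  then have "h integrable_on {0..b}"
    by (intro integrable_on_if_bounded_off_finite[OF meas, of "{0, T}"]) auto
  with not_int show False by contradiction
qed

lemma integral_identity_imp_exp_decay:
  fixes h :: "real \<Rightarrow> real" and k :: real
  assumes k: "k > 0" and meas: "h \<in> borel_measurable borel" and nonneg: "\<And>x. h x \<ge> 0"
    and eq: "\<And>t. 0 < t \<Longrightarrow> integral {0..t} h = h t * (exp (k * t) - 1) / k"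
  obtains A where "A \<ge> 0" "\<And>t. 0 < t \<Longrightarrow> h t = A * exp (- k * t)"
proof
  define A where "A = h 1 * exp k"
  show "A \<ge> 0" using nonneg[of 1] by (simp add: A_def)
  fix t :: real assume t: "0 < t"
  obtain A' where A': "\<And>x. 0 < x \<Longrightarrow> x < t + 2 \<Longrightarrow> h x * exp (k * x) = A'"
    using integral_identity_imp_exp_mult_const[OF k integral_identity_imp_integrable[OF k meas nonneg eq] eq]
    by blast
  have "h t * exp (k * t) = A"
    using A'[of t] A'[of 1] t by (simp add: A_def)
  then show "h t = A * exp (- k * t)"
    by (simp add: exp_minus field_simps)
qed

lemma exp_decay_integral_identity:
  fixes h :: "real \<Rightarrow> real" and k A t :: real
  assumes k: "k > 0" and t: "t > 0" and h: "\<And>x. 0 < x \<Longrightarrow> h x = A * exp (- k * x)"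
  shows "integral {0..t} h = h t * (exp (k * t) - 1) / k"
proof -
  have FTC: "((\<lambda>x. A * exp (- k * x)) has_integral (- A / k * exp (- k * t)) - (- A / k * exp (- k * 0))) {0..t}"
    using k t by (intro fundamental_theorem_of_calculus)
      (auto intro!: derivative_eq_intros simp: has_real_derivative_iff_has_vector_derivative[symmetric])
  have val: "(- A / k * exp (- k * t)) - (- A / k * exp (- k * 0)) = h t * (exp (k * t) - 1) / k"
    using k t by (simp add: h exp_minus field_simps)
  have "(h has_integral (- A / k * exp (- k * t)) - (- A / k * exp (- k * 0))) {0..t}"
    by (rule has_integral_spike_finite[where S="{0}", OF _ _ FTC]) (auto simp: h)
  then show ?thesis
    unfolding val by (rule integral_unique)
qed

lemma past_egf_identity_iff:
  fixes f F :: "real \<Rightarrow> real" and \<mu> s t :: real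
  assumes "F t > 0" "\<mu> > 0" "s > 0"
  shows "past_egf f F s t = \<mu> * (rev_hazard f F t) powr s * (exp (s * t / \<mu>) - 1) / s \<longleftrightarrow>
    integral {0..t} (\<lambda>x. f x powr s) = f t powr s * (exp (s / \<mu> * t) - 1) / (s / \<mu>)"
proof -
  have "past_egf f F s t = integral {0..t} (\<lambda>x. f x powr s) / F t powr s"
    unfolding past_egf_def powr_divide integral_divide ..
  moreover have "\<mu> * (rev_hazard f F t) powr s * (exp (s * t / \<mu>) - 1) / s
      = f t powr s * (exp (s / \<mu> * t) - 1) / (s / \<mu>) / F t powr s"
    unfolding rev_hazard_def powr_divide by (simp add: field_simps)
  moreover have "F t powr s \<noteq> 0" using assms(1) by simp
  ultimately show ?thesis by (simp only: divide_cancel_right) simp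
qed

lemma exponential_distributedD_cdf_deriv:
  fixes M :: "'a measure" and X :: "'a \<Rightarrow> real" and f F :: "real \<Rightarrow> real" and \<mu> t :: real
  assumes "prob_space M" and D: "distributed M lborel X (exponential_density (1 / \<mu>))"
    and F: "\<And>t. F t = measure M {\<omega> \<in> space M. X \<omega> \<le> t}"
    and F': "\<And>t. t > 0 \<Longrightarrow> (F has_real_derivative f t) (at t)"
    and \<mu>: "\<mu> > 0" and t: "t > 0"
  shows "F t > 0" "f t = exp (- t / \<mu>) / \<mu>"
proof -
  interpret prob_space M by fact
  have F_eq: "F x = 1 - exp (- x / \<mu>)" if "x \<ge> 0" for x
    using exponential_distributedD_le[OF D that] \<mu> by (simp add: F)
  then show "F t > 0" using t \<mu> by simp
  have "((\<lambda>x. 1 - exp (- x / \<mu>)) has_real_derivative exp (- t / \<mu>) / \<mu>) (at t)"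
    using \<mu> by (auto intro!: derivative_eq_intros simp: field_simps)
  then have "(F has_real_derivative exp (- t / \<mu>) / \<mu>) (at t)"
    by (rule has_field_derivative_transform_within_open[where S="{0<..}"]) (use t F_eq in auto)
  then show "f t = exp (- t / \<mu>) / \<mu>" using F'[OF t] DERIV_unique by blast
qed

lemma distributed_density_AE_zero:
  fixes f :: "'b \<Rightarrow> real"
  assumes D: "distributed M N X f" and nonneg: "\<And>x. f x \<ge> 0"
    and A: "A \<in> sets N" and avoid: "\<And>\<omega>. \<omega> \<in> space M \<Longrightarrow> X \<omega> \<notin> A"
  shows "AE x in N. x \<in> A \<longrightarrow> f x = 0"
proof -
  have "X -` A \<inter> space M = {}" using avoid by blast
  then have "(\<integral>\<^sup>+ x. ennreal (f x) * indicator A x \<partial>N) = 0"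
    using distributed_emeasure[OF D A] by simp
  moreover have "(\<lambda>x. ennreal (f x) * indicator A x) \<in> borel_measurable N"
    using distributed_borel_measurable[OF D] A by measurable
  ultimately have "AE x in N. ennreal (f x) * indicator A x = 0"
    by (simp add: nn_integral_0_iff_AE)
  then show ?thesis
    by eventually_elim (use nonneg in \<open>auto simp: indicator_def\<close>)
qed

lemma distributed_if_AE_proportional:
  fixes f g :: "'b \<Rightarrow> real"
  assumes "prob_space M" and D: "distributed M N X f"
    and g: "prob_space (density N g)" "(\<lambda>x. ennreal (g x)) \<in> borel_measurable N"
    and scaled: "AE x in N. f x = c * g x" and "c \<ge> 0" and g_nonneg: "\<And>x. g x \<ge> 0"
  shows "distributed M N X g"
proof -
  interpret prob_space M by fact
  have f_meas: "(\<lambda>x. ennreal (f x)) \<in> borel_measurable N"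
    using distributed_borel_measurable[OF D] .
  have "(\<integral>\<^sup>+ x. ennreal (f x) \<partial>N) = emeasure (distr M N X) (space N)"
    using distributed_distr_eq_density[OF D] f_meas by (simp add: emeasure_density)
  also have "\<dots> = 1"
    using prob_space.emeasure_space_1[OF prob_space_distr[OF distributed_measurable[OF D]]] by simp
  finally have f_one: "(\<integral>\<^sup>+ x. ennreal (f x) \<partial>N) = 1" .
  have g_one: "(\<integral>\<^sup>+ x. ennreal (g x) \<partial>N) = 1"
    using prob_space.emeasure_space_1[OF g(1)] g(2) by (simp add: emeasure_density)
  have "(\<integral>\<^sup>+ x. ennreal (f x) \<partial>N) = (\<integral>\<^sup>+ x. ennreal c * ennreal (g x) \<partial>N)"
    using scaled by (intro nn_integral_cong_AE) (auto simp: ennreal_mult \<open>c \<ge> 0\<close> g_nonneg)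
  also have "\<dots> = ennreal c"
    using g_one g(2) by (simp add: nn_integral_cmult)
  finally have "c = 1" using f_one \<open>c \<ge> 0\<close> by simp
  with scaled have "AE x in N. ennreal (f x) = ennreal (g x)" by auto
  with D show ?thesis using distributed_cong_density[OF _ g(2) f_meas] by blast
qed

lemma exponential_distributed_if_density_on_pos:
  fixes M :: "'a measure" and X :: "'a \<Rightarrow> real" and f :: "real \<Rightarrow> real" and \<mu> c :: real
  assumes "prob_space M" and D: "distributed M lborel X f" and nonneg: "\<And>x. f x \<ge> 0"
    and X_nonneg: "\<And>\<omega>. \<omega> \<in> space M \<Longrightarrow> X \<omega> \<ge> 0"
    and \<mu>: "\<mu> > 0" and f_pos: "\<And>t. t > 0 \<Longrightarrow> f t = c * exp (- t / \<mu>)"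
  shows "distributed M lborel X (exponential_density (1 / \<mu>))"
proof (rule distributed_if_AE_proportional[OF assms(1) D])
  show "prob_space (density lborel (exponential_density (1 / \<mu>)))"
    using \<mu> by (simp add: prob_space_exponential_density)
  show "(\<lambda>x. ennreal (exponential_density (1 / \<mu>) x)) \<in> borel_measurable lborel"
    by measurable
  show "c * \<mu> \<ge> 0"
    using nonneg[of 1] f_pos[of 1] \<mu> by (simp add: zero_le_mult_iff)
  show "exponential_density (1 / \<mu>) x \<ge> 0" for x
    using \<mu> by (simp add: exponential_density_def)
  have "AE x in lborel. x \<in> {..<0} \<longrightarrow> f x = 0"
    using X_nonneg by (intro distributed_density_AE_zero[OF D nonneg]) (auto simp: not_less)
  then show "AE x in lborel. f x = c * \<mu> * exponential_density (1 / \<mu>) x"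
    using AE_lborel_singleton[of 0]
    by eventually_elim (use \<mu> f_pos in \<open>auto simp: exponential_density_def not_less\<close>)
qed

lemma exponential_imp_past_egf_identity:
  fixes M :: "'a measure" and X :: "'a \<Rightarrow> real" and f F :: "real \<Rightarrow> real" and \<mu> s :: real
  assumes "prob_space M" and exponential: "distributed M lborel X (exponential_density (1 / \<mu>))"
    and F: "\<And>t. F t = measure M {\<omega> \<in> space M. X \<omega> \<le> t}"
    and F': "\<And>t. t > 0 \<Longrightarrow> (F has_real_derivative f t) (at t)"
    and \<mu>: "\<mu> > 0" and s: "s > 0"
  shows "\<forall>t>0. F t > 0 \<and>
    past_egf f F s t = \<mu> * (rev_hazard f F t) powr s * (exp (s * t / \<mu>) - 1) / s"
proof (intro allI impI conjI)
  have F_pos: "F t > 0" and f_eq: "f t = exp (- t / \<mu>) / \<mu>" if "t > 0" for t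
    using exponential_distributedD_cdf_deriv[OF assms(1) exponential F F' \<mu> that] by auto
  have "f x powr s = (1 / \<mu>) powr s * exp (- (s / \<mu>) * x)" if "x > 0" for x
  proof -
    have "f x powr s = (1 / \<mu> * exp (- x / \<mu>)) powr s"
      using f_eq[OF that] by simp
    also have "\<dots> = (1 / \<mu>) powr s * exp (- x / \<mu> * s)"
      using \<mu> by (subst powr_mult) (simp_all add: exp_powr_real)
    finally show ?thesis by (simp add: mult.commute)
  qed
  then have identity: "integral {0..t} (\<lambda>x. f x powr s) = f t powr s * (exp (s / \<mu> * t) - 1) / (s / \<mu>)"
    if "t > 0" for t
    using \<mu> s that by (intro exp_decay_integral_identity) auto
  fix t :: real assume "t > 0"
  show "F t > 0" by (rule F_pos[OF \<open>t > 0\<close>])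
  show "past_egf f F s t = \<mu> * (rev_hazard f F t) powr s * (exp (s * t / \<mu>) - 1) / s"
    unfolding past_egf_identity_iff[where F = F and t = t, OF F_pos[OF \<open>t > 0\<close>] \<mu> s]
    by (rule identity[OF \<open>t > 0\<close>])
qed

lemma past_egf_identity_imp_exponential:
  fixes M :: "'a measure" and X :: "'a \<Rightarrow> real" and f F :: "real \<Rightarrow> real" and \<mu> s :: real
  assumes "prob_space M" and D: "distributed M lborel X f" and nonneg: "\<And>x. f x \<ge> 0"
    and X_nonneg: "\<And>\<omega>. \<omega> \<in> space M \<Longrightarrow> X \<omega> \<ge> 0"
    and \<mu>: "\<mu> > 0" and s: "s > 0"
    and H: "\<forall>t>0. F t > 0 \<and>
      past_egf f F s t = \<mu> * (rev_hazard f F t) powr s * (exp (s * t / \<mu>) - 1) / s"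
  shows "distributed M lborel X (exponential_density (1 / \<mu>))"
proof -
  have k: "s / \<mu> > 0" using \<mu> s by simp
  have identity: "integral {0..t} (\<lambda>x. f x powr s) = f t powr s * (exp (s / \<mu> * t) - 1) / (s / \<mu>)"
    if "t > 0" for t
    using H[rule_format, OF that] past_egf_identity_iff[where F = F and t = t, OF _ \<mu> s] by simp
  have "(\<lambda>x. f x powr s) \<in> borel_measurable borel"
    using distributed_real_measurable[OF nonneg D] by measurable
  then obtain A where A: "A \<ge> 0" "\<And>t. t > 0 \<Longrightarrow> f t powr s = A * exp (- (s / \<mu>) * t)"
    using integral_identity_imp_exp_decay[OF k _ _ identity] by auto
  have f_eq: "f t = A powr (1 / s) * exp (- t / \<mu>)" if "t > 0" for t
  proof -
    have "f t = (f t powr s) powr (1 / s)"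
      using nonneg[of t] s by (simp add: powr_powr)
    also have "\<dots> = A powr (1 / s) * exp (- (s / \<mu>) * t * (1 / s))"
      using A that by (subst A(2)) (simp_all add: powr_mult exp_powr_real)
    finally show ?thesis using s by simp
  qed
  show ?thesis
    by (rule exponential_distributed_if_density_on_pos[OF assms(1) D nonneg]) (fact X_nonneg \<mu> f_eq)+
qed

theorem theorem3p4:
  fixes M :: "'a measure" and X :: "'a \<Rightarrow> real" and f F :: "real \<Rightarrow> real"
    and \<mu> s :: real
  assumes "prob_space M"
    and "distributed M lborel X f"
    and "\<And>x. f x \<ge> 0"
    and "\<And>\<omega>. \<omega> \<in> space M \<Longrightarrow> X \<omega> \<ge> 0"
    and "\<And>t. F t = measure M {\<omega> \<in> space M. X \<omega> \<le> t}"
    and "\<And>t. t > 0 \<Longrightarrow> (F has_real_derivative f t) (at t)"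
    and "\<mu> > 0"
    and "s \<ge> 1"
  shows "distributed M lborel X (exponential_density (1 / \<mu>)) \<longleftrightarrow>
    (\<forall>t>0. F t > 0 \<and>
       past_egf f F s t = \<mu> * (rev_hazard f F t) powr s * (exp (s * t / \<mu>) - 1) / s)"
proof
  have s: "s > 0" using assms(8) by simp
  show "\<forall>t>0. F t > 0 \<and>
      past_egf f F s t = \<mu> * (rev_hazard f F t) powr s * (exp (s * t / \<mu>) - 1) / s"
    if "distributed M lborel X (exponential_density (1 / \<mu>))"
    by (rule exponential_imp_past_egf_identity[OF assms(1) that]) (fact assms(5-7) s)+
  show "distributed M lborel X (exponential_density (1 / \<mu>))"
    if "\<forall>t>0. F t > 0 \<and>
      past_egf f F s t = \<mu> * (rev_hazard f F t) powr s * (exp (s * t / \<mu>) - 1) / s"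
    by (rule past_egf_identity_imp_exponential[OF assms(1-3)]) (fact assms(4,7) s that)+
qed

end
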